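(* Let $G$ be a connected graph. Then $\mathrm{lpt}(G)\le \max |C^*|$, where the maximum is taken over all bonds $C^*$ of $G$.
   Context: All graphs are finite, simple and undirected. $\mathrm{lpt}(G)$ denotes the minimum size of a set of vertices of $G$ that intersects (shares a vertex with) every longest path of $G$. A bond of $G$ is a minimal nonempty edge-cut, where an edge-cut is a set of edges of the form $\{xy\in E(G): x\in X, y\in V(G)\setminus X\}$ for some $X\subseteq V(G)$; $|C^*|$ is the number of edges of the bond $C^*$. *)

theory Defs
  imports Main
begin

definition simple_graph :: "'a set \<Rightarrow> 'a set set \<Rightarrow> bool" where
  "simple_graph V E \<longleftrightarrow> finite V \<and>
     (\<forall>e\<in>E. \<exists>x y. x \<in> V \<and> y \<in> V \<and> x \<noteq> y \<and> e = {x, y})"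

definition is_path :: "'a set \<Rightarrow> 'a set set \<Rightarrow> 'a list \<Rightarrow> bool" where
  "is_path V E p \<longleftrightarrow> p \<noteq> [] \<and> distinct p \<and> set p \<subseteq> V \<and>
     (\<forall>i. Suc i < length p \<longrightarrow> {p ! i, p ! Suc i} \<in> E)"

definition longest_path :: "'a set \<Rightarrow> 'a set set \<Rightarrow> 'a list \<Rightarrow> bool" where
  "longest_path V E p \<longleftrightarrow> is_path V E p \<and>
     (\<forall>q. is_path V E q \<longrightarrow> length q \<le> length p)"

definition connected_graph :: "'a set \<Rightarrow> 'a set set \<Rightarrow> bool" where
  "connected_graph V E \<longleftrightarrow> V \<noteq> {} \<and>
     (\<forall>u\<in>V. \<forall>v\<in>V. \<exists>p. is_path V E p \<and> hd p = u \<and> last p = v)"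

definition lpt :: "'a set \<Rightarrow> 'a set set \<Rightarrow> nat" where
  "lpt V E = Min {card S | S. S \<subseteq> V \<and>
     (\<forall>p. longest_path V E p \<longrightarrow> set p \<inter> S \<noteq> {})}"

definition edge_cut :: "'a set \<Rightarrow> 'a set set \<Rightarrow> 'a set \<Rightarrow> 'a set set" where
  "edge_cut V E X = {e \<in> E. \<exists>x y. x \<in> X \<and> y \<in> V - X \<and> e = {x, y}}"

definition is_edge_cut :: "'a set \<Rightarrow> 'a set set \<Rightarrow> 'a set set \<Rightarrow> bool" where
  "is_edge_cut V E C \<longleftrightarrow> (\<exists>X. X \<subseteq> V \<and> C = edge_cut V E X)"

definition is_bond :: "'a set \<Rightarrow> 'a set set \<Rightarrow> 'a set set \<Rightarrow> bool" where
  "is_bond V E C \<longleftrightarrow> is_edge_cut V E C \<and> C \<noteq> {} \<and>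
     (\<forall>D. is_edge_cut V E D \<and> D \<noteq> {} \<and> D \<subseteq> C \<longrightarrow> D = C)"

end

theory Submission
  imports Defs
begin

text \<open>Call X \<subseteq> V a hitting bipartition if X and V - X both induce connected subgraphs and
  X meets every longest path; V minus an end of a longest path is one. Fix one, X, of minimum
  size, and let S be the set of vertices of X with a neighbour outside X. Every longest path P
  meets S: otherwise P lies inside X, and growing P to a maximal connected set inside X - {s},
  for some s \<in> S, gives a smaller hitting bipartition, because any two longest paths of a
  connected graph intersect. Hence lpt(G) \<le> |S|, and S injects into the edge cut of X, which
  is a bond because both of its sides are connected.\<close>

definition connected_on :: "'a set set \<Rightarrow> 'a set \<Rightarrow> bool" where
  "connected_on E W \<longleftrightarrow> W \<noteq> {} \<and>
     (\<forall>A. A \<subseteq> W \<and> A \<noteq> {} \<and> A \<noteq> W \<longrightarrow> (\<exists>a\<in>A. \<exists>b\<in>W - A. {a, b} \<in> E))"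

lemma connected_onD:
  "connected_on E W \<Longrightarrow> A \<subseteq> W \<Longrightarrow> A \<noteq> {} \<Longrightarrow> A \<noteq> W \<Longrightarrow> \<exists>a\<in>A. \<exists>b\<in>W - A. {a, b} \<in> E"
  unfolding connected_on_def by blast

lemma connected_on_nonempty: "connected_on E W \<Longrightarrow> W \<noteq> {}"
  unfolding connected_on_def by blast

lemma connected_on_singleton: "connected_on E {v}"
  unfolding connected_on_def by auto

lemma is_path_iff:
  "is_path V E p \<longleftrightarrow>
     p \<noteq> [] \<and> distinct p \<and> set p \<subseteq> V \<and> successively (\<lambda>x y. {x, y} \<in> E) p"
  unfolding is_path_def successively_conv_nth by blast

lemma successively_crossing_edge:
  assumes "successively (\<lambda>x y. {x, y} \<in> E) p"
    and "a \<in> set p" "a \<in> A" "b \<in> set p" "b \<notin> A"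
  shows "\<exists>x y. x \<in> A \<and> y \<notin> A \<and> x \<in> set p \<and> y \<in> set p \<and> {x, y} \<in> E"
  using assms
proof (induction p arbitrary: a b rule: induct_list012)
  case (3 x y p)
  show ?case
  proof (cases "x \<in> A \<longleftrightarrow> y \<in> A")
    case True
    with "3.prems" have "\<exists>a'\<in>set (y # p). a' \<in> A" "\<exists>b'\<in>set (y # p). b' \<notin> A"
      by auto
    with "3.IH"(2) "3.prems"(1) show ?thesis by fastforce
  next
    case False
    have "{x, y} \<in> E" "{y, x} \<in> E" "x \<in> set (x # y # p)" "y \<in> set (x # y # p)"
      using "3.prems"(1) by (simp_all add: insert_commute)
    with False show ?thesis by blast
  qed
qed auto

lemma connected_on_path: "is_path V E p \<Longrightarrow> connected_on E (set p)"
  unfolding connected_on_def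
proof (intro conjI allI impI)
  fix A assume p: "is_path V E p" and A: "A \<subseteq> set p \<and> A \<noteq> {} \<and> A \<noteq> set p"
  then obtain a b where "a \<in> A" "b \<in> set p" "b \<notin> A" by blast
  with successively_crossing_edge[of E p a A b] p A
  show "\<exists>a\<in>A. \<exists>b\<in>set p - A. {a, b} \<in> E"
    unfolding is_path_iff by blast
qed (simp add: is_path_def)

lemma connected_on_vertices: "connected_graph V E \<Longrightarrow> connected_on E V"
  unfolding connected_on_def
proof (intro conjI allI impI)
  fix A assume G: "connected_graph V E" and A: "A \<subseteq> V \<and> A \<noteq> {} \<and> A \<noteq> V"
  then obtain u v where uv: "u \<in> A" "v \<in> V" "v \<notin> A" by blast
  then obtain p where p: "is_path V E p" "hd p = u" "last p = v"
    using G A unfolding connected_graph_def by blast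
  then have "u \<in> set p" "v \<in> set p"
    unfolding is_path_def by auto
  with successively_crossing_edge[of E p u A v] p uv obtain x y
    where "x \<in> A" "y \<notin> A" "y \<in> set p" "{x, y} \<in> E"
    unfolding is_path_iff by blast
  with p(1) show "\<exists>a\<in>A. \<exists>b\<in>V - A. {a, b} \<in> E"
    unfolding is_path_def by blast
qed (auto simp: connected_graph_def)

lemma connected_on_insert:
  assumes "connected_on E W" "w \<in> W" "{w, b} \<in> E"
  shows "connected_on E (insert b W)"
  unfolding connected_on_def
proof (intro conjI allI impI)
  fix A assume A: "A \<subseteq> insert b W \<and> A \<noteq> {} \<and> A \<noteq> insert b W"
  consider "A \<inter> W = {}" | "W \<subseteq> A" | "A \<inter> W \<noteq> {}" "A \<inter> W \<noteq> W"
    by blast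
  then show "\<exists>a\<in>A. \<exists>c\<in>insert b W - A. {a, c} \<in> E"
  proof cases
    case 1
    with A have "A = {b}" by blast
    with assms 1 show ?thesis by (auto simp: insert_commute)
  next
    case 2
    with A assms show ?thesis by blast
  next
    case 3
    then show ?thesis
      using connected_onD[OF assms(1), of "A \<inter> W"] by blast
  qed
qed simp

lemma connected_on_subset_or_disjoint:
  assumes "connected_on E W" "W \<subseteq> V"
    and "\<And>a b. a \<in> W \<Longrightarrow> b \<in> W \<Longrightarrow> {a, b} \<notin> edge_cut V E Z"
  shows "W \<subseteq> Z \<or> W \<inter> Z = {}"
proof (rule ccontr)
  assume "\<not> (W \<subseteq> Z \<or> W \<inter> Z = {})"
  then obtain a b where "a \<in> W \<inter> Z" "b \<in> W - W \<inter> Z" "{a, b} \<in> E"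
    using connected_onD[OF assms(1), of "W \<inter> Z"] by blast
  with assms(2) assms(3)[of a b] show False
    unfolding edge_cut_def by blast
qed

lemma edge_cut_complement: "X \<subseteq> V \<Longrightarrow> edge_cut V E (V - X) = edge_cut V E X"
  unfolding edge_cut_def by (auto simp: insert_commute double_diff)

lemma edge_cut_trivial: "edge_cut V E V = {}" "edge_cut V E {} = {}"
  unfolding edge_cut_def by auto

lemma edge_cut_same_side:
  "a \<in> X \<and> b \<in> X \<or> a \<in> V - X \<and> b \<in> V - X \<Longrightarrow> {a, b} \<notin> edge_cut V E X"
  unfolding edge_cut_def by (auto simp: doubleton_eq_iff)

lemma is_bond_edge_cut:
  assumes "connected_on E V" "X \<subseteq> V" "connected_on E X" "connected_on E (V - X)"
  shows "is_bond V E (edge_cut V E X)"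
  unfolding is_bond_def
proof (intro conjI allI impI)
  show "is_edge_cut V E (edge_cut V E X)"
    unfolding is_edge_cut_def using assms(2) by blast
  have "X \<noteq> {}" "X \<noteq> V"
    using connected_on_nonempty[OF assms(3)] connected_on_nonempty[OF assms(4)] by auto
  then show "edge_cut V E X \<noteq> {}"
    using connected_onD[OF assms(1,2)] unfolding edge_cut_def by blast
  fix D assume D: "is_edge_cut V E D \<and> D \<noteq> {} \<and> D \<subseteq> edge_cut V E X"
  then obtain Z where Z: "Z \<subseteq> V" "D = edge_cut V E Z"
    unfolding is_edge_cut_def by blast
  have "X \<subseteq> Z \<or> X \<inter> Z = {}" "V - X \<subseteq> Z \<or> (V - X) \<inter> Z = {}"
    using connected_on_subset_or_disjoint[OF assms(3,2), of Z]
      connected_on_subset_or_disjoint[OF assms(4), of V Z] D Z edge_cut_same_side[of _ X]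
    by blast+
  then have "Z = X \<or> Z = V - X \<or> Z = V \<or> Z = {}"
    using Z(1) assms(2) by blast
  then show "D = edge_cut V E X"
    using D Z by (auto simp: edge_cut_trivial edge_cut_complement[OF assms(2)])
qed

lemma connected_on_Diff_if_no_edges:
  assumes "connected_on E V" "X \<subseteq> W" "W \<subseteq> V" "connected_on E (V - W)"
    and no_edge: "\<And>a b. a \<in> W - X \<Longrightarrow> b \<in> X \<Longrightarrow> {a, b} \<notin> E"
  shows "connected_on E (V - X)"
proof -
  have leaves: "\<exists>a\<in>B. \<exists>b\<in>(V - X) - B. {a, b} \<in> E" if B: "B \<subseteq> W - X" "B \<noteq> {}" for B
  proof -
    have "B \<subseteq> V" "B \<noteq> V"
      using connected_on_nonempty[OF assms(4)] B assms(3) by blast+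
    then obtain a b where "a \<in> B" "b \<in> V - B" "{a, b} \<in> E"
      using connected_onD[OF assms(1) _ B(2)] by blast
    with B no_edge show ?thesis by blast
  qed
  show ?thesis
    unfolding connected_on_def
  proof (intro conjI allI impI)
    show "V - X \<noteq> {}"
      using connected_on_nonempty[OF assms(4)] assms(2) by blast
    fix A assume A: "A \<subseteq> V - X \<and> A \<noteq> {} \<and> A \<noteq> V - X"
    consider "A \<subseteq> W" | "V - W \<subseteq> A" | "A \<inter> (V - W) \<noteq> {}" "A \<inter> (V - W) \<noteq> V - W"
      using A by blast
    then show "\<exists>a\<in>A. \<exists>b\<in>V - X - A. {a, b} \<in> E"
    proof cases
      case 1
      with A have "A \<subseteq> W - X" by blast
      from leaves[OF this] A show ?thesis by blast
    next
      case 2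
      with A have "V - X - A \<subseteq> W - X" "V - X - A \<noteq> {}" by blast+
      from leaves[OF this] obtain a b where "a \<in> V - X - A" "b \<in> A" "{a, b} \<in> E"
        using A by blast
      then show ?thesis by (metis insert_commute)
    next
      case 3
      from connected_onD[OF assms(4) Int_lower2 this] obtain a b
        where "a \<in> A" "b \<in> V - W - A" "{a, b} \<in> E" by blast
      with assms(2) show ?thesis by blast
    qed
  qed
qed

text \<open>Grow T to a maximal connected set inside W; the maximality leaves no edges from it
  into the rest of W.\<close>
lemma connected_on_grow:
  assumes "finite V" "connected_on E V" "T \<subseteq> W" "W \<subseteq> V"
    and "connected_on E T" "connected_on E (V - W)"
  shows "\<exists>X. T \<subseteq> X \<and> X \<subseteq> W \<and> connected_on E X \<and> connected_on E (V - X)"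
proof -
  let ?P = "\<lambda>X. T \<subseteq> X \<and> X \<subseteq> W \<and> connected_on E X"
  have "card X < card V + 1" if "?P X" for X
  proof -
    from that assms(4) have "X \<subseteq> V" by blast
    with assms(1) show ?thesis by (simp add: card_mono le_imp_less_Suc)
  qed
  then obtain X where X: "?P X" and max: "\<And>Y. ?P Y \<Longrightarrow> card Y \<le> card X"
    using ex_has_greatest_nat[of ?P T card "card V + 1"] assms(3,5) by blast
  have "finite X"
    using X assms(4) finite_subset[OF _ assms(1)] by blast
  have "{a, b} \<notin> E" if "a \<in> W - X" "b \<in> X" for a b
  proof
    assume "{a, b} \<in> E"
    then have "{b, a} \<in> E"
      by (simp add: insert_commute)
    with X that have "?P (insert a X)"
      using connected_on_insert[of E X b a] by blast
    with max have "card (insert a X) \<le> card X" by blast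
    with \<open>finite X\<close> that show False by simp
  qed
  with connected_on_Diff_if_no_edges[OF assms(2) _ assms(4,6)] X show ?thesis
    by blast
qed

lemma is_path_take: "is_path V E p \<Longrightarrow> 0 < n \<Longrightarrow> is_path V E (take n p)"
  unfolding is_path_iff
  using successively_append_iff[of _ "take n p" "drop n p"] set_take_subset[of n p]
  by auto

lemma is_path_drop: "is_path V E p \<Longrightarrow> n < length p \<Longrightarrow> is_path V E (drop n p)"
  unfolding is_path_iff
  using successively_append_iff[of _ "take n p" "drop n p"] set_drop_subset[of n p]
  by auto

lemma is_path_rev: "is_path V E p \<Longrightarrow> is_path V E (rev p)"
  unfolding is_path_iff by (simp add: insert_commute)

text \<open>One of the two pieces into which v splits p contains at least half of p.\<close>
lemma long_subpath_ending_at: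
  assumes "is_path V E p" "v \<in> set p"
  shows "\<exists>xs. is_path V E (xs @ [v]) \<and> set (xs @ [v]) \<subseteq> set p \<and>
              length p + 1 \<le> 2 * length (xs @ [v])"
proof -
  obtain i where i: "i < length p" "p ! i = v"
    using assms(2) by (meson in_set_conv_nth)
  show ?thesis
  proof (cases "length p + 1 \<le> 2 * (i + 1)")
    case True
    have "take (Suc i) p = take i p @ [v]"
      using i by (simp add: take_Suc_conv_app_nth)
    moreover have "is_path V E (take (Suc i) p)"
      using is_path_take[OF assms(1)] by blast
    moreover have "length (take (Suc i) p) = i + 1"
      using i by simp
    ultimately show ?thesis
      using True set_take_subset[of "Suc i" p] by (intro exI[of _ "take i p"]) simp
  next
    case False
    have "rev (drop i p) = rev (drop (Suc i) p) @ [v]"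
      using i by (simp add: Cons_nth_drop_Suc[symmetric])
    moreover have "is_path V E (rev (drop i p))"
      using is_path_rev[OF is_path_drop[OF assms(1) i(1)]] .
    moreover have "length (rev (drop i p)) = length p - i"
      by simp
    ultimately show ?thesis
      using False i assms(2) set_drop_subset[of "Suc i" p]
      by (intro exI[of _ "rev (drop (Suc i) p)"]) auto
  qed
qed

lemma is_path_join:
  assumes "is_path V E (xs @ [u])" "is_path V E (w # ys)"
    and "set (xs @ [u]) \<inter> set (w # ys) = {}"
    and "set mid \<inter> (set (xs @ [u]) \<union> set (w # ys)) = {}"
    and "is_path V E (u # mid @ [w])"
  shows "is_path V E (xs @ u # mid @ w # ys)"
proof -
  let ?adj = "\<lambda>x y. {x, y} \<in> E"
  have "successively ?adj ((u # mid) @ [w])" "successively ?adj (w # ys)"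
    using assms(2,5) unfolding is_path_iff by simp_all
  then have "successively ?adj ((u # mid) @ w # ys)"
    using successively_append_iff[of ?adj "u # mid" "[w]"]
      successively_append_iff[of ?adj "u # mid" "w # ys"] by simp
  moreover have "successively ?adj (xs @ [u])"
    using assms(1) unfolding is_path_iff by simp
  ultimately have "successively ?adj (xs @ u # mid @ w # ys)"
    by (simp add: successively_append_iff)
  with assms show ?thesis
    unfolding is_path_iff by auto
qed

lemma path_bridge:
  assumes "is_path V E p" "last p \<in> B" "a \<in> set p" "a \<in> A" "A \<inter> B = {}"
  shows "\<exists>u mid w. u \<in> A \<and> w \<in> B \<and> set mid \<inter> (A \<union> B) = {} \<and>
           is_path V E (u # mid @ [w])"
  using assms
proof (induction p arbitrary: a)
  case Nil
  then show ?case by simp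
next
  case (Cons x p)
  show ?case
  proof (cases "\<exists>a'\<in>set p. a' \<in> A")
    case True
    then obtain a' where a': "a' \<in> set p" "a' \<in> A" by blast
    then have "p \<noteq> []" by auto
    then have "is_path V E p" "last p \<in> B"
      using is_path_drop[OF Cons.prems(1), of 1] Cons.prems(2) by simp_all
    with a' Cons.IH Cons.prems(5) show ?thesis by blast
  next
    case False
    with Cons.prems have "x \<in> A" "x \<notin> B" by auto
    with Cons.prems(2) have "p \<noteq> []" "last p \<in> B"
      by (auto split: if_splits)
    then have "\<exists>w\<in>set p. w \<in> B"
      using last_in_set by blast
    then obtain mid w rest where split: "p = mid @ w # rest" "w \<in> B" "\<forall>y\<in>set mid. y \<notin> B"
      using split_list_first_prop[of p "\<lambda>y. y \<in> B"] by blast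
    have "is_path V E (x # mid @ [w])"
      using is_path_take[OF Cons.prems(1), of "length mid + 2"] split(1) by simp
    moreover have "set mid \<inter> (A \<union> B) = {}"
      using False split by auto
    ultimately show ?thesis
      using \<open>x \<in> A\<close> \<open>w \<in> B\<close> by blast
  qed
qed

text \<open>Otherwise the longer halves of P and Q, joined through a bridge between them, would form
  a path longer than P.\<close>
lemma longest_paths_intersect:
  assumes "connected_graph V E" "longest_path V E P" "longest_path V E Q"
  shows "set P \<inter> set Q \<noteq> {}"
proof
  assume disj: "set P \<inter> set Q = {}"
  have P: "is_path V E P" and Q: "is_path V E Q" and len: "length Q = length P"
    using assms(2,3) unfolding longest_path_def by (meson le_antisym)+
  then have "hd P \<in> set P" "hd Q \<in> set Q" "set P \<subseteq> V" "set Q \<subseteq> V"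
    unfolding is_path_def by auto
  then obtain p where p: "is_path V E p" "hd p = hd P" "last p = hd Q"
    using assms(1) unfolding connected_graph_def by blast
  have "hd p \<in> set p"
    using p(1) by (simp add: is_path_def)
  then obtain u mid w where u: "u \<in> set P" and w: "w \<in> set Q"
    and mid: "set mid \<inter> (set P \<union> set Q) = {}" and bridge: "is_path V E (u # mid @ [w])"
    using path_bridge[OF p(1), of "set Q" "hd p" "set P"] p \<open>hd P \<in> set P\<close> \<open>hd Q \<in> set Q\<close> disj
    by auto
  obtain xs where xs: "is_path V E (xs @ [u])" "set (xs @ [u]) \<subseteq> set P"
    "length P + 1 \<le> 2 * length (xs @ [u])"
    using long_subpath_ending_at[OF P u] by blast
  obtain ys where ys: "is_path V E (ys @ [w])" "set (ys @ [w]) \<subseteq> set Q"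
    "length Q + 1 \<le> 2 * length (ys @ [w])"
    using long_subpath_ending_at[OF Q w] by blast
  have "is_path V E (w # rev ys)" "set (w # rev ys) \<subseteq> set Q"
    using is_path_rev[OF ys(1)] ys(2) by auto
  with xs disj mid bridge have "is_path V E (xs @ u # mid @ w # rev ys)"
    by (intro is_path_join) blast+
  then have "length (xs @ u # mid @ w # rev ys) \<le> length P"
    using assms(2) unfolding longest_path_def by blast
  with xs(3) ys(3) len show False by simp
qed

lemma finite_edges: "simple_graph V E \<Longrightarrow> finite E"
proof -
  assume G: "simple_graph V E"
  then have "E \<subseteq> Pow V"
    unfolding simple_graph_def by fastforce
  with G show "finite E"
    unfolding simple_graph_def by (meson finite_Pow_iff finite_subset)
qed

lemma length_path_le_card: "finite V \<Longrightarrow> is_path V E p \<Longrightarrow> length p \<le> card V"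
  unfolding is_path_def by (metis card_mono distinct_card)

lemma exists_longest_path:
  assumes "finite V" "V \<noteq> {}"
  shows "\<exists>p. longest_path V E p"
proof -
  obtain v where "v \<in> V"
    using assms(2) by blast
  then have "is_path V E [v]"
    unfolding is_path_def by simp
  with length_path_le_card[OF assms(1)] show ?thesis
    unfolding longest_path_def
    using ex_has_greatest_nat[of "is_path V E" "[v]" length "card V + 1"] by fastforce
qed

lemma longest_path_length_ge_2:
  assumes "simple_graph V E" "E \<noteq> {}" "longest_path V E p"
  shows "2 \<le> length p"
proof -
  obtain e where "e \<in> E"
    using assms(2) by blast
  with assms(1) obtain x y where "x \<in> V" "y \<in> V" "x \<noteq> y" "e = {x, y}"
    unfolding simple_graph_def by blast
  with \<open>e \<in> E\<close> have "is_path V E [x, y]"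
    unfolding is_path_def by (simp add: less_Suc_eq)
  with assms(3) show ?thesis
    unfolding longest_path_def by fastforce
qed

text \<open>All neighbours of the end of a longest path lie on the path, so removing the end
  cannot disconnect the graph.\<close>
lemma connected_on_remove_longest_path_end:
  assumes "finite V" "connected_on E V" "longest_path V E p" "2 \<le> length p"
  shows "connected_on E (V - {last p})"
proof -
  have p: "is_path V E p"
    using assms(3) unfolding longest_path_def by blast
  then obtain q y where p_eq: "p = q @ [y]"
    unfolding is_path_def by (metis rev_exhaust)
  with p have "y \<in> V" "set q \<subseteq> V - {y}"
    unfolding is_path_def by auto
  have "q \<noteq> []"
    using assms(4) p_eq by auto
  then have "is_path V E q"
    using is_path_take[OF p, of "length q"] p_eq by simp
  moreover have "connected_on E (V - (V - {y}))"
    using \<open>y \<in> V\<close> connected_on_singleton by (simp add: double_diff)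
  ultimately obtain X where X: "set q \<subseteq> X" "X \<subseteq> V - {y}"
    "connected_on E X" "connected_on E (V - X)"
    using connected_on_grow[OF assms(1,2) \<open>set q \<subseteq> V - {y}\<close> Diff_subset connected_on_path]
    by blast
  have "X = V - {y}"
  proof (rule ccontr)
    assume "X \<noteq> V - {y}"
    with X(2) \<open>y \<in> V\<close> have "{y} \<subseteq> V - X" "{y} \<noteq> V - X"
      by blast+
    then obtain b where b: "b \<in> V - X" "b \<noteq> y" "{y, b} \<in> E"
      using connected_onD[OF X(4)] by blast
    with X(1) p_eq have "b \<notin> set p"
      by auto
    with p b p_eq have "is_path V E (p @ [b])"
      unfolding is_path_iff by (auto simp: successively_append_iff)
    with assms(3) show False
      unfolding longest_path_def by fastforce
  qed
  with X(3) p_eq show ?thesis by simp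
qed

definition hitting_bipartition :: "'a set \<Rightarrow> 'a set set \<Rightarrow> 'a set \<Rightarrow> bool" where
  "hitting_bipartition V E X \<longleftrightarrow> X \<subseteq> V \<and> connected_on E X \<and> connected_on E (V - X) \<and>
     (\<forall>Q. longest_path V E Q \<longrightarrow> set Q \<inter> X \<noteq> {})"

lemma hitting_bipartition_exists:
  assumes "simple_graph V E" "connected_graph V E" "E \<noteq> {}"
  shows "\<exists>X. hitting_bipartition V E X"
proof -
  have fin: "finite V" and "V \<noteq> {}"
    using assms(1,2) unfolding simple_graph_def connected_graph_def by blast+
  then obtain p where p: "longest_path V E p"
    using exists_longest_path by blast
  let ?y = "last p"
  have len: "2 \<le> length q" if "longest_path V E q" for q
    using longest_path_length_ge_2[OF assms(1,3) that] .
  have "set q \<inter> (V - {?y}) \<noteq> {}" if q: "longest_path V E q" for q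
  proof -
    from q have "distinct q" "set q \<subseteq> V"
      unfolding longest_path_def is_path_def by blast+
    with len[OF q] have "2 \<le> card (set q)"
      by (simp add: distinct_card)
    then have "\<not> set q \<subseteq> {?y}"
      using card_mono[of "{?y}" "set q"] by auto
    with \<open>set q \<subseteq> V\<close> show ?thesis by blast
  qed
  moreover have "?y \<in> V"
    using p unfolding longest_path_def is_path_def by auto
  then have "connected_on E (V - (V - {?y}))"
    using connected_on_singleton by (simp add: double_diff)
  moreover have "connected_on E (V - {?y})"
    using connected_on_remove_longest_path_end[OF fin connected_on_vertices[OF assms(2)] p len[OF p]] .
  ultimately have "hitting_bipartition V E (V - {?y})"
    unfolding hitting_bipartition_def by blast
  then show ?thesis ..
qed

definition inner_boundary :: "'a set \<Rightarrow> 'a set set \<Rightarrow> 'a set \<Rightarrow> 'a set" where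
  "inner_boundary V E X = {a \<in> X. \<exists>z\<in>V - X. {a, z} \<in> E}"

lemma path_subset_if_avoids_inner_boundary:
  assumes "is_path V E p" "set p \<inter> X \<noteq> {}" "set p \<inter> inner_boundary V E X = {}"
  shows "set p \<subseteq> X"
proof
  fix b assume "b \<in> set p"
  obtain a where "a \<in> set p" "a \<in> X"
    using assms(2) by blast
  show "b \<in> X"
  proof (rule ccontr)
    assume "b \<notin> X"
    then obtain c d where "c \<in> X" "d \<notin> X" "c \<in> set p" "d \<in> set p" "{c, d} \<in> E"
      using successively_crossing_edge[of E p a X b] assms(1) \<open>a \<in> set p\<close> \<open>a \<in> X\<close> \<open>b \<in> set p\<close>
      unfolding is_path_iff by blast
    with assms(1) have "c \<in> set p \<inter> inner_boundary V E X"
      unfolding inner_boundary_def is_path_def by blast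
    with assms(3) show False by blast
  qed
qed

lemma longest_path_meets_inner_boundary:
  assumes fin: "finite V" and G: "connected_graph V E" and X: "hitting_bipartition V E X"
    and min: "\<And>Y. hitting_bipartition V E Y \<Longrightarrow> card X \<le> card Y"
    and P: "longest_path V E P"
  shows "set P \<inter> inner_boundary V E X \<noteq> {}"
proof
  assume avoid: "set P \<inter> inner_boundary V E X = {}"
  have cV: "connected_on E V"
    using connected_on_vertices[OF G] .
  have XV: "X \<subseteq> V" and cX: "connected_on E X" and cY: "connected_on E (V - X)"
    and meet: "\<And>Q. longest_path V E Q \<Longrightarrow> set Q \<inter> X \<noteq> {}"
    using X unfolding hitting_bipartition_def by blast+
  have p: "is_path V E P"
    using P unfolding longest_path_def by blast
  have PX: "set P \<subseteq> X"
    using path_subset_if_avoids_inner_boundary[OF p meet[OF P] avoid] .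
  have "X \<noteq> {}" "X \<noteq> V"
    using connected_on_nonempty[OF cX] connected_on_nonempty[OF cY] by blast+
  then obtain s z where s: "s \<in> X" "z \<in> V - X" "{s, z} \<in> E"
    using connected_onD[OF cV XV] by blast
  then have "s \<in> inner_boundary V E X"
    unfolding inner_boundary_def by blast
  with PX avoid have "set P \<subseteq> X - {s}"
    by blast
  moreover have "X - {s} \<subseteq> V"
    using XV by blast
  moreover have "connected_on E (V - (X - {s}))"
  proof -
    have "V - (X - {s}) = insert s (V - X)"
      using s(1) XV by blast
    moreover have "{z, s} \<in> E"
      using s(3) by (simp add: insert_commute)
    ultimately show ?thesis
      using connected_on_insert[OF cY s(2)] by simp
  qed
  ultimately have "\<exists>X'. set P \<subseteq> X' \<and> X' \<subseteq> X - {s} \<and> connected_on E X' \<and> connected_on E (V - X')"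
    by (rule connected_on_grow[OF fin cV _ _ connected_on_path[OF p]])
  then obtain X' where X': "set P \<subseteq> X'" "X' \<subseteq> X - {s}"
    "connected_on E X'" "connected_on E (V - X')"
    by blast
  have "hitting_bipartition V E X'"
    unfolding hitting_bipartition_def
  proof (intro conjI allI impI)
    show "X' \<subseteq> V"
      using X'(2) XV by blast
    show "connected_on E X'" "connected_on E (V - X')"
      using X'(3,4) .
    fix Q assume "longest_path V E Q"
    with longest_paths_intersect[OF G _ P] X'(1) show "set Q \<inter> X' \<noteq> {}"
      by blast
  qed
  with min have "card X \<le> card X'" .
  moreover have "card X' < card X"
  proof (rule psubset_card_mono)
    show "finite X"
      using XV fin by (rule finite_subset)
    show "X' \<subset> X"
      using X'(2) s(1) by blast
  qed
  ultimately show False by simp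
qed

lemma card_inner_boundary_le_card_edge_cut:
  assumes "finite E"
  shows "card (inner_boundary V E X) \<le> card (edge_cut V E X)"
proof -
  obtain f where f: "\<And>a. a \<in> inner_boundary V E X \<Longrightarrow> f a \<in> V - X \<and> {a, f a} \<in> E"
    using bchoice[of "inner_boundary V E X" "\<lambda>a z. z \<in> V - X \<and> {a, z} \<in> E"]
    unfolding inner_boundary_def by blast
  have "inj_on (\<lambda>a. {a, f a}) (inner_boundary V E X)"
  proof (rule inj_onI)
    fix a b assume ab: "a \<in> inner_boundary V E X" "b \<in> inner_boundary V E X"
      and "{a, f a} = {b, f b}"
    moreover have "a \<in> X" "b \<in> X"
      using ab unfolding inner_boundary_def by blast+
    ultimately show "a = b"
      using f[OF ab(1)] f[OF ab(2)] by (auto simp: doubleton_eq_iff)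
  qed
  moreover have "(\<lambda>a. {a, f a}) ` inner_boundary V E X \<subseteq> edge_cut V E X"
    using f unfolding inner_boundary_def edge_cut_def by blast
  moreover have "finite (edge_cut V E X)"
    using assms unfolding edge_cut_def by simp
  ultimately show ?thesis
    by (rule card_inj_on_le)
qed

lemma lpt_le_card:
  assumes "finite V" "S \<subseteq> V" "\<And>p. longest_path V E p \<Longrightarrow> set p \<inter> S \<noteq> {}"
  shows "lpt V E \<le> card S"
  unfolding lpt_def
proof (rule Min_le)
  have "{card S | S. S \<subseteq> V \<and> (\<forall>p. longest_path V E p \<longrightarrow> set p \<inter> S \<noteq> {})} \<subseteq> {..card V}"
    using card_mono[OF assms(1)] by auto
  then show "finite {card S | S. S \<subseteq> V \<and> (\<forall>p. longest_path V E p \<longrightarrow> set p \<inter> S \<noteq> {})}"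
    using finite_subset by blast
  show "card S \<in> {card S | S. S \<subseteq> V \<and> (\<forall>p. longest_path V E p \<longrightarrow> set p \<inter> S \<noteq> {})}"
    using assms(2,3) by blast
qed

lemma card_bond_le_Max:
  assumes "finite E" "is_bond V E C"
  shows "card C \<le> Max {card C | C. is_bond V E C}"
proof (rule Max_ge)
  have "{C. is_bond V E C} \<subseteq> Pow E"
    unfolding is_bond_def is_edge_cut_def edge_cut_def by blast
  with assms(1) have "finite {C. is_bond V E C}"
    by (meson finite_Pow_iff finite_subset)
  then show "finite {card C | C. is_bond V E C}"
    by simp
  show "card C \<in> {card C | C. is_bond V E C}"
    using assms(2) by blast
qed

theorem corollary3:
  fixes V :: "'a set" and E :: "'a set set"
  assumes "simple_graph V E"
    and "connected_graph V E"
    and "E \<noteq> {}"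
  shows "lpt V E \<le> Max {card C | C. is_bond V E C}"
proof -
  have fin: "finite V"
    using assms(1) unfolding simple_graph_def by blast
  obtain X0 where "hitting_bipartition V E X0"
    using hitting_bipartition_exists[OF assms] by blast
  then obtain X where X: "hitting_bipartition V E X"
    and min: "\<And>Y. hitting_bipartition V E Y \<Longrightarrow> card X \<le> card Y"
    using ex_has_least_nat[of "hitting_bipartition V E" X0 card] by blast
  then have XV: "X \<subseteq> V" "connected_on E X" "connected_on E (V - X)"
    unfolding hitting_bipartition_def by blast+
  have "inner_boundary V E X \<subseteq> V"
    using XV(1) unfolding inner_boundary_def by blast
  then have "lpt V E \<le> card (inner_boundary V E X)"
    using lpt_le_card[OF fin] longest_path_meets_inner_boundary[OF fin assms(2) X min] by blast
  also have "\<dots> \<le> card (edge_cut V E X)"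
    using card_inner_boundary_le_card_edge_cut[OF finite_edges[OF assms(1)]] .
  also have "\<dots> \<le> Max {card C | C. is_bond V E C}"
    using card_bond_le_Max[OF finite_edges[OF assms(1)]
        is_bond_edge_cut[OF connected_on_vertices[OF assms(2)] XV]] .
  finally show ?thesis .
qed

end
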